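(* Let $\mathcal{H}$ be a complex Hilbert space and let $A\in\mathcal{B}(\mathcal{H})$ be a positive operator with $\dim R(A)\ge 2$. Let $T\in\mathcal{B}_A(\mathcal{H})$ and $q\in\mathbb{C}$ with $|q|\le 1$. Then \[ w_{q,A}(T)\le\Big(|q|^2w_A^2(T)+(1-|q|^2)\|T\|_A^2+2|q|\sqrt{1-|q|^2}\,w_A(T)\|T\|_A\Big)^{1/2}. \]
   Context: $A$ induces the semi-inner product $\langle x,y\rangle_A=\langle Ax,y\rangle$ and seminorm $\|x\|_A=\sqrt{\langle x,x\rangle_A}$. For an operator $S$, $\|S\|_A=\sup\{\|Sx\|_A/\|x\|_A : x\in\overline{R(A)},\,x\neq 0\}$. $\mathcal{B}_A(\mathcal{H})$ is the set of operators $T$ admitting an $A$-adjoint, i.e. an operator $W$ with $\langle Tx,y\rangle_A=\langle x,Wy\rangle_A$ for all $x,y$. The $A$-$q$-numerical radius is $w_{q,A}(T)=\sup\{|\langle Tx,y\rangle_A| : \|x\|_A=\|y\|_A=1,\ \langle x,y\rangle_A=q\}$, and $w_A(T)=w_{1,A}(T)=\sup\{|\langle Tx,x\rangle_A|:\|x\|_A=1\}$ is the $A$-numerical radius. *)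

theory Defs
  imports "HOL-Analysis.Analysis"
begin

text \<open>A complex Hilbert space is modelled
as a real Hilbert space (type class real_inner + complete_space, real inner product = Re of
the complex one) together with a complex structure J (multiplication by i), which is a
real-linear isometry with J(J x) = -x.  The complex inner product (linear in the first
argument) is then  <x,y> = x . y + i (x . J y).\<close>

definition complex_structure :: "('a::real_inner \<Rightarrow> 'a) \<Rightarrow> bool" where
  "complex_structure J \<longleftrightarrow> linear J \<and> (\<forall>x. J (J x) = - x) \<and> (\<forall>x y. J x \<bullet> J y = x \<bullet> y)"

definition scaleC :: "('a::real_inner \<Rightarrow> 'a) \<Rightarrow> complex \<Rightarrow> 'a \<Rightarrow> 'a" where
  "scaleC J c x = Re c *\<^sub>R x + Im c *\<^sub>R J x"

definition cinner :: "('a::real_inner \<Rightarrow> 'a) \<Rightarrow> 'a \<Rightarrow> 'a \<Rightarrow> complex" where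
  "cinner J x y = Complex (x \<bullet> y) (x \<bullet> J y)"

definition bounded_clinear_op :: "('a::real_inner \<Rightarrow> 'a) \<Rightarrow> ('a \<Rightarrow> 'a) \<Rightarrow> bool" where
  "bounded_clinear_op J T \<longleftrightarrow> bounded_linear T \<and> (\<forall>x. T (J x) = J (T x))"

definition positive_op :: "('a::real_inner \<Rightarrow> 'a) \<Rightarrow> ('a \<Rightarrow> 'a) \<Rightarrow> bool" where
  "positive_op J A \<longleftrightarrow> bounded_clinear_op J A \<and>
     (\<forall>x. Im (cinner J (A x) x) = 0 \<and> Re (cinner J (A x) x) \<ge> 0)"

definition range_dim_ge_2 :: "('a::real_inner \<Rightarrow> 'a) \<Rightarrow> ('a \<Rightarrow> 'a) \<Rightarrow> bool" where
  "range_dim_ge_2 J A \<longleftrightarrow> (\<exists>u\<in>range A. \<exists>v\<in>range A.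
      \<forall>a b. scaleC J a u + scaleC J b v = 0 \<longrightarrow> a = 0 \<and> b = 0)"

definition A_inner :: "('a::real_inner \<Rightarrow> 'a) \<Rightarrow> ('a \<Rightarrow> 'a) \<Rightarrow> 'a \<Rightarrow> 'a \<Rightarrow> complex" where
  "A_inner J A x y = cinner J (A x) y"

definition A_norm :: "('a::real_inner \<Rightarrow> 'a) \<Rightarrow> ('a \<Rightarrow> 'a) \<Rightarrow> 'a \<Rightarrow> real" where
  "A_norm J A x = sqrt (Re (A_inner J A x x))"

definition A_opnorm :: "('a::real_inner \<Rightarrow> 'a) \<Rightarrow> ('a \<Rightarrow> 'a) \<Rightarrow> ('a \<Rightarrow> 'a) \<Rightarrow> real" where
  "A_opnorm J A S = Sup {A_norm J A (S x) / A_norm J A x | x. x \<in> closure (range A) \<and> x \<noteq> 0}"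

definition B_A :: "('a::real_inner \<Rightarrow> 'a) \<Rightarrow> ('a \<Rightarrow> 'a) \<Rightarrow> ('a \<Rightarrow> 'a) set" where
  "B_A J A = {T. bounded_clinear_op J T \<and>
     (\<exists>W. bounded_clinear_op J W \<and> (\<forall>x y. A_inner J A (T x) y = A_inner J A x (W y)))}"

definition w_qA :: "('a::real_inner \<Rightarrow> 'a) \<Rightarrow> ('a \<Rightarrow> 'a) \<Rightarrow> complex \<Rightarrow> ('a \<Rightarrow> 'a) \<Rightarrow> real" where
  "w_qA J A q T = Sup {cmod (A_inner J A (T x) y) | x y.
      A_norm J A x = 1 \<and> A_norm J A y = 1 \<and> A_inner J A x y = q}"

definition w_A :: "('a::real_inner \<Rightarrow> 'a) \<Rightarrow> ('a \<Rightarrow> 'a) \<Rightarrow> ('a \<Rightarrow> 'a) \<Rightarrow> real" where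
  "w_A J A T = Sup {cmod (A_inner J A (T x) x) | x. A_norm J A x = 1}"

end

theory Submission
  imports Defs
begin

text \<open>For A-unit vectors x, y with <x,y>_A = q, the vector w = y - cnj q x is A-orthogonal
  to x with ||w||_A = sqrt (1 - |q|^2). Hence <Tx,y>_A = q <Tx,x>_A + <Tx,w>_A, and the
  Cauchy-Schwarz inequality for the semi-inner product gives
  |<Tx,y>_A| <= |q| w_A(T) + sqrt (1 - |q|^2) ||T||_A, whose square is the radicand of the theorem.

  An operator with an A-adjoint W is A-bounded, by the
  power trick for the A-symmetric operator W T. Since ||T||_A is a supremum over the closure of
  R(A) only, the estimate ||Tx||_A <= ||T||_A ||x||_A for arbitrary x needs R(A) to be dense for
  the A-seminorm, which Landweber iteration provides. Finally dim R(A) >= 2 yields, by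
  Gram-Schmidt, A-unit vectors x, y with <x,y>_A = q.\<close>

lemma quadratic_nonneg_imp_discriminant_le:
  fixes a b c :: real
  assumes nonneg: "\<And>t. 0 \<le> a + 2 * t * b + t\<^sup>2 * c" and "0 \<le> c"
  shows "b\<^sup>2 \<le> a * c"
proof (cases "c = 0")
  case True
  have "b = 0"
  proof (rule ccontr)
    assume "b \<noteq> 0"
    have "0 \<le> a + 2 * (- (a + 1) / (2 * b)) * b"
      using nonneg[of "- (a + 1) / (2 * b)"] True by simp
    also have "\<dots> = -1" using \<open>b \<noteq> 0\<close> by (simp add: field_simps)
    finally show False by simp
  qed
  then show ?thesis using nonneg[of 0] True by simp
next
  case False
  with \<open>0 \<le> c\<close> have "c > 0" by simp
  have "0 \<le> a + 2 * (- b / c) * b + (- b / c)\<^sup>2 * c" by (rule nonneg)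
  also have "\<dots> = (a * c - b\<^sup>2) / c" using \<open>c > 0\<close> by (simp add: field_simps power2_eq_square)
  finally show ?thesis using \<open>c > 0\<close> by (simp add: zero_le_divide_iff)
qed

lemma power2_iterate_le:
  fixes f :: "nat \<Rightarrow> real"
  assumes square_le: "\<And>m. (f m)\<^sup>2 \<le> f (2 * m)" and "0 \<le> f 1"
  shows "f 1 ^ 2 ^ n \<le> f (2 ^ n)"
proof (induction n)
  case (Suc n)
  have "f 1 ^ 2 ^ Suc n = (f 1 ^ 2 ^ n)\<^sup>2"
    by (simp add: power_mult[symmetric] mult.commute)
  also have "\<dots> \<le> (f (2 ^ n))\<^sup>2"
    using Suc \<open>0 \<le> f 1\<close> by (simp add: power_mono)
  also have "\<dots> \<le> f (2 ^ Suc n)"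
    using square_le[of "2 ^ n"] by simp
  finally show ?case .
qed simp

lemma le_if_power2_iterates_bounded:
  fixes a K L :: real
  assumes "0 < L" and bounded: "\<And>n. a ^ 2 ^ n \<le> K * L ^ 2 ^ n"
  shows "a \<le> L"
proof (rule ccontr)
  assume "\<not> a \<le> L"
  define r where "r = a / L"
  have "1 < r" using \<open>\<not> a \<le> L\<close> \<open>0 < L\<close> by (simp add: r_def)
  then obtain n where "K < r ^ n" using real_arch_pow by blast
  also have "\<dots> \<le> r ^ 2 ^ n"
    using \<open>1 < r\<close> by (intro power_increasing) (simp_all add: less_imp_le)
  also have "\<dots> \<le> K"
    using bounded[of n] \<open>0 < L\<close> by (simp add: r_def power_divide pos_divide_le_eq)
  finally show False by simp
qed

lemma norm_funpow_le:
  fixes f :: "'a::real_normed_vector \<Rightarrow> 'a"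
  assumes bounded: "\<And>x. norm (f x) \<le> K * norm x" and "0 \<le> K"
  shows "norm ((f ^^ m) x) \<le> K ^ m * norm x"
proof (induction m)
  case (Suc m)
  have "norm ((f ^^ Suc m) x) \<le> K * norm ((f ^^ m) x)"
    using bounded by simp
  also have "\<dots> \<le> K * (K ^ m * norm x)"
    using Suc \<open>0 \<le> K\<close> by (rule mult_left_mono)
  finally show ?case by simp
qed simp

lemma mult_add_mult_le_sqrt_expanded:
  fixes c a b :: real
  assumes "c\<^sup>2 \<le> 1"
  shows "c * a + sqrt (1 - c\<^sup>2) * b
    \<le> sqrt (c\<^sup>2 * a\<^sup>2 + (1 - c\<^sup>2) * b\<^sup>2 + 2 * c * sqrt (1 - c\<^sup>2) * a * b)"
proof -
  have "c\<^sup>2 * a\<^sup>2 + (1 - c\<^sup>2) * b\<^sup>2 + 2 * c * sqrt (1 - c\<^sup>2) * a * b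
      = (c * a + sqrt (1 - c\<^sup>2) * b)\<^sup>2"
    using assms by (simp add: power2_sum power_mult_distrib algebra_simps)
  then show ?thesis by simp
qed

locale semi_hilbertian =
  fixes J :: "'a::real_inner \<Rightarrow> 'a" and A :: "'a \<Rightarrow> 'a"
  assumes complex_structure: "complex_structure J" and positive: "positive_op J A"
begin

lemma linear_J: "linear J"
  using complex_structure by (simp add: complex_structure_def)

lemma J_J [simp]: "J (J x) = - x"
  using complex_structure by (simp add: complex_structure_def)

lemma inner_J_J [simp]: "J x \<bullet> J y = x \<bullet> y"
  using complex_structure by (simp add: complex_structure_def)

lemma inner_J_left: "J x \<bullet> y = - (x \<bullet> J y)"
  by (metis J_J inner_J_J inner_minus_left)

lemmas J_add [simp] = linear_add[OF linear_J]
  and J_diff [simp] = linear_diff[OF linear_J]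
  and J_scaleR [simp] = linear_scale[OF linear_J]

lemma bounded_linear_A: "bounded_linear A"
  using positive by (simp add: positive_op_def bounded_clinear_op_def)

lemma A_J: "A (J x) = J (A x)"
  using positive by (simp add: positive_op_def bounded_clinear_op_def)

lemmas A_add [simp] = linear_add[OF bounded_linear.linear[OF bounded_linear_A]]
  and A_diff [simp] = linear_diff[OF bounded_linear.linear[OF bounded_linear_A]]
  and A_scaleR [simp] = linear_scale[OF bounded_linear.linear[OF bounded_linear_A]]
  and A_minus [simp] = linear_neg[OF bounded_linear.linear[OF bounded_linear_A]]
  and A_zero [simp] = linear_0[OF bounded_linear.linear[OF bounded_linear_A]]

lemma A_form_nonneg: "0 \<le> A x \<bullet> x"
  using positive by (simp add: positive_op_def cinner_def)

lemma A_form_J_self [simp]: "A x \<bullet> J x = 0"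
  using positive by (simp add: positive_op_def cinner_def)

lemma A_form_commute: "A x \<bullet> y = A y \<bullet> x"
proof -
  have polar: "A u \<bullet> J v + A v \<bullet> J u = 0" for u v
    using A_form_J_self[of "u + v"] by (simp add: inner_add_left inner_add_right)
  show ?thesis
    using polar[of x "J y"] by (simp add: A_J)
qed

lemma A_selfadjoint: "A x \<bullet> y = x \<bullet> A y"
  by (metis A_form_commute inner_commute)

lemma A_form_J_left: "A (J x) \<bullet> y = - (A x \<bullet> J y)"
  by (simp add: A_J inner_J_left)

lemma A_form_Cauchy_Schwarz: "(A x \<bullet> y)\<^sup>2 \<le> (A x \<bullet> x) * (A y \<bullet> y)"
proof (rule quadratic_nonneg_imp_discriminant_le)
  fix t
  have "0 \<le> A (x + t *\<^sub>R y) \<bullet> (x + t *\<^sub>R y)" by (rule A_form_nonneg)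
  also have "\<dots> = A x \<bullet> x + 2 * t * (A x \<bullet> y) + t\<^sup>2 * (A y \<bullet> y)"
    using A_form_commute[of y x]
    by (simp add: inner_add_left inner_add_right algebra_simps power2_eq_square)
  finally show "0 \<le> A x \<bullet> x + 2 * t * (A x \<bullet> y) + t\<^sup>2 * (A y \<bullet> y)" .
qed (rule A_form_nonneg)

lemma A_inner_eq: "A_inner J A x y = Complex (A x \<bullet> y) (A x \<bullet> J y)"
  by (simp add: A_inner_def cinner_def)

lemma A_norm_eq: "A_norm J A x = sqrt (A x \<bullet> x)"
  by (simp add: A_norm_def A_inner_def cinner_def)

lemma A_norm_nonneg: "0 \<le> A_norm J A x"
  by (simp add: A_norm_eq A_form_nonneg)

lemma A_norm_power2: "(A_norm J A x)\<^sup>2 = A x \<bullet> x"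
  by (simp add: A_norm_eq A_form_nonneg)

lemma A_inner_self: "A_inner J A x x = complex_of_real ((A_norm J A x)\<^sup>2)"
  by (simp add: A_inner_eq A_norm_power2 complex_of_real_def)

lemma A_inner_add_left: "A_inner J A (x + y) z = A_inner J A x z + A_inner J A y z"
  by (simp add: A_inner_eq inner_add_left complex_eq_iff)

lemma A_inner_diff_left: "A_inner J A (x - y) z = A_inner J A x z - A_inner J A y z"
  by (simp add: A_inner_eq inner_diff_left complex_eq_iff)

lemma A_inner_add_right: "A_inner J A x (y + z) = A_inner J A x y + A_inner J A x z"
  by (simp add: A_inner_eq inner_add_right complex_eq_iff)

lemma A_inner_diff_right: "A_inner J A x (y - z) = A_inner J A x y - A_inner J A x z"
  by (simp add: A_inner_eq inner_diff_right complex_eq_iff)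

lemma A_inner_scaleC_left: "A_inner J A (scaleC J c x) y = c * A_inner J A x y"
  by (simp add: A_inner_eq scaleC_def inner_add_left A_form_J_left complex_eq_iff)

lemma A_inner_scaleC_right: "A_inner J A x (scaleC J c y) = cnj c * A_inner J A x y"
  by (simp add: A_inner_eq scaleC_def inner_add_right complex_eq_iff algebra_simps)

lemma A_inner_commute: "A_inner J A y x = cnj (A_inner J A x y)"
  by (simp add: A_inner_eq complex_eq_iff A_form_commute[of y] A_form_J_left)

lemma scaleC_of_real [simp]: "scaleC J (complex_of_real r) x = r *\<^sub>R x"
  by (simp add: scaleC_def)

lemma A_scaleC: "A (scaleC J c x) = scaleC J c (A x)"
  by (simp add: scaleC_def A_J)

lemma A_inner_scaleR_left [simp]: "A_inner J A (r *\<^sub>R x) y = r * A_inner J A x y"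
  using A_inner_scaleC_left[of "complex_of_real r" x y] by simp

lemma A_inner_scaleR_right [simp]: "A_inner J A x (r *\<^sub>R y) = r * A_inner J A x y"
  using A_inner_scaleC_right[of x "complex_of_real r" y] by simp

lemma A_norm_eq_1_iff: "A_norm J A x = 1 \<longleftrightarrow> A_inner J A x x = 1"
  using A_norm_nonneg[of x] by (auto simp: A_inner_self complex_eq_iff power2_eq_1_iff)

lemma A_form_eq_Re: "A x \<bullet> y = Re (A_inner J A x y)"
  by (simp add: A_inner_eq)

lemma cmod_A_inner_le: "cmod (A_inner J A x y) \<le> A_norm J A x * A_norm J A y"
proof -
  define c where "c = A_inner J A x y"
  define y' where "y' = scaleC J c y"
  have "A_inner J A x y' = complex_of_real ((cmod c)\<^sup>2)"
    by (simp add: y'_def A_inner_scaleC_right c_def mult.commute complex_mult_cnj cmod_power2)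
  then have x_y': "A x \<bullet> y' = (cmod c)\<^sup>2"
    by (simp add: A_form_eq_Re)
  have "A_inner J A y' y' = c * cnj c * A_inner J A y y"
    by (simp add: y'_def A_inner_scaleC_left A_inner_scaleC_right mult.assoc)
  then have y'_y': "A y' \<bullet> y' = (cmod c)\<^sup>2 * (A y \<bullet> y)"
    by (simp add: A_form_eq_Re complex_mult_cnj cmod_power2)
  have "((cmod c)\<^sup>2)\<^sup>2 \<le> (A x \<bullet> x) * ((cmod c)\<^sup>2 * (A y \<bullet> y))"
    using A_form_Cauchy_Schwarz[of x y'] by (simp add: x_y' y'_y')
  then have "(cmod c)\<^sup>2 \<le> (A x \<bullet> x) * (A y \<bullet> y)"
    by (cases "c = 0") (auto simp: power2_eq_square A_form_nonneg mult.left_commute)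
  then have "sqrt ((cmod c)\<^sup>2) \<le> sqrt ((A x \<bullet> x) * (A y \<bullet> y))"
    by (rule real_sqrt_le_mono)
  then show ?thesis by (simp add: c_def A_norm_eq real_sqrt_mult)
qed

lemma A_form_le: "A x \<bullet> y \<le> A_norm J A x * A_norm J A y"
  using complex_Re_le_cmod[of "A_inner J A x y"] cmod_A_inner_le[of x y]
  by (simp add: A_form_eq_Re)

lemma A_norm_triangle: "A_norm J A (x + y) \<le> A_norm J A x + A_norm J A y"
proof -
  have "(A_norm J A (x + y))\<^sup>2 = (A_norm J A x)\<^sup>2 + 2 * (A x \<bullet> y) + (A_norm J A y)\<^sup>2"
    using A_form_commute[of y x] by (simp add: A_norm_power2 inner_add_left inner_add_right)
  also have "\<dots> \<le> (A_norm J A x + A_norm J A y)\<^sup>2"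
    using A_form_le[of x y] by (simp add: power2_sum)
  finally show ?thesis
    using A_norm_nonneg by (meson add_nonneg_nonneg power2_le_imp_le)
qed

lemma A_norm_minus [simp]: "A_norm J A (- x) = A_norm J A x"
  by (simp add: A_norm_eq)

lemma A_form_le_onorm: "A z \<bullet> z \<le> onorm A * (norm z)\<^sup>2"
proof -
  have "A z \<bullet> z \<le> norm (A z) * norm z" by (rule norm_cauchy_schwarz)
  also have "\<dots> \<le> onorm A * norm z * norm z"
    by (simp add: mult_right_mono onorm[OF bounded_linear_A])
  finally show ?thesis by (simp add: power2_eq_square mult.assoc)
qed

lemma norm_A_power2_le: "(norm (A z))\<^sup>2 \<le> onorm A * (A z \<bullet> z)"
proof -
  have "A (A z) \<bullet> A z \<le> norm (A (A z)) * norm (A z)"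
    by (rule norm_cauchy_schwarz)
  also have "\<dots> \<le> onorm A * norm (A z) * norm (A z)"
    by (simp add: mult_right_mono onorm[OF bounded_linear_A])
  finally have AAz: "A (A z) \<bullet> A z \<le> onorm A * (norm (A z))\<^sup>2"
    by (simp add: power2_eq_square mult.assoc)
  have "((norm (A z))\<^sup>2)\<^sup>2 = (A (A z) \<bullet> z)\<^sup>2"
    by (simp add: A_selfadjoint power2_norm_eq_inner)
  also have "\<dots> \<le> (A (A z) \<bullet> A z) * (A z \<bullet> z)"
    by (rule A_form_Cauchy_Schwarz)
  also have "\<dots> \<le> (norm (A z))\<^sup>2 * (onorm A * (A z \<bullet> z))"
    using AAz A_form_nonneg[of z]
    by (metis mult.assoc mult.commute mult_right_mono)
  finally show ?thesis
    by (cases "A z = 0") (auto simp: power2_eq_square A_form_nonneg onorm_pos_le[OF bounded_linear_A])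
qed

lemma range_A_A_form_eq_0:
  assumes "z \<in> range A" and "A z \<bullet> z = 0"
  shows "z = 0"
proof -
  have "(A z \<bullet> A z)\<^sup>2 \<le> 0"
    using A_form_Cauchy_Schwarz[of z "A z"] assms(2) by simp
  then have "A z = 0" by simp
  obtain w where "z = A w" using assms(1) by blast
  then have "z \<bullet> z = w \<bullet> A z" by (simp add: A_selfadjoint)
  with \<open>A z = 0\<close> show ?thesis by simp
qed

definition landweber_step :: "real \<Rightarrow> 'a \<Rightarrow> 'a" where
  "landweber_step c z = z - (1 / c) *\<^sub>R A z"

lemma landweber_step_decrease:
  assumes "onorm A < c"
  shows "A z \<bullet> z \<le> c * ((norm z)\<^sup>2 - (norm (landweber_step c z))\<^sup>2)"
proof -
  have "c > 0" using assms onorm_pos_le[OF bounded_linear_A] by linarith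
  have "(norm (landweber_step c z))\<^sup>2 = (norm z)\<^sup>2 - 2 / c * (A z \<bullet> z) + (norm (A z))\<^sup>2 / c\<^sup>2"
    unfolding landweber_step_def power2_norm_eq_inner
    by (simp add: inner_diff_left inner_diff_right inner_commute[of z "A z"]
        power2_eq_square algebra_simps)
  then have "c * ((norm z)\<^sup>2 - (norm (landweber_step c z))\<^sup>2) = 2 * (A z \<bullet> z) - (norm (A z))\<^sup>2 / c"
    using \<open>c > 0\<close> by (simp add: field_simps power2_eq_square)
  moreover have "(norm (A z))\<^sup>2 \<le> c * (A z \<bullet> z)"
    using norm_A_power2_le[of z] mult_right_mono[OF less_imp_le[OF assms] A_form_nonneg[of z]]
    by linarith
  then have "(norm (A z))\<^sup>2 / c \<le> A z \<bullet> z"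
    using \<open>c > 0\<close> by (simp add: divide_le_eq mult.commute)
  ultimately show ?thesis by simp
qed

lemma landweber_residual_in_range: "x - (landweber_step c ^^ n) x \<in> range A"
proof (induction n)
  case 0
  show ?case by (auto intro: range_eqI[of _ _ 0])
next
  case (Suc n)
  then obtain w where "x - (landweber_step c ^^ n) x = A w" by blast
  then have "x - (landweber_step c ^^ Suc n) x = A (w + (1 / c) *\<^sub>R (landweber_step c ^^ n) x)"
    by (simp add: landweber_step_def algebra_simps)
  then show ?case by blast
qed

lemma landweber_A_form_sum_le:
  assumes "onorm A < c"
  shows "(\<Sum>k<n. A ((landweber_step c ^^ k) x) \<bullet> (landweber_step c ^^ k) x)
    \<le> c * ((norm x)\<^sup>2 - (norm ((landweber_step c ^^ n) x))\<^sup>2)"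
proof (induction n)
  case (Suc n)
  then show ?case
    using landweber_step_decrease[OF assms, of "(landweber_step c ^^ n) x"]
    by (simp add: algebra_simps)
qed simp

text \<open>The residuals of the Landweber iteration for the equation A w = x have summable
  A-seminorms squared, so some residual is A-small although x need not lie in the closure of R(A).\<close>

lemma range_A_dense_in_A_norm:
  assumes "d > 0"
  shows "\<exists>w. A_norm J A (x - A w) < d"
proof (rule ccontr)
  define c where "c = onorm A + 1"
  have "onorm A < c" by (simp add: c_def)
  assume "\<not> ?thesis"
  then have far: "d \<le> A_norm J A (x - A w)" for w
    by (simp add: not_less)
  have residual_large: "d\<^sup>2 \<le> A ((landweber_step c ^^ k) x) \<bullet> (landweber_step c ^^ k) x" for k
  proof -
    obtain w where "x - (landweber_step c ^^ k) x = A w"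
      using landweber_residual_in_range by blast
    then have "(landweber_step c ^^ k) x = x - A w"
      by (simp add: algebra_simps)
    then have "d \<le> A_norm J A ((landweber_step c ^^ k) x)"
      using far[of w] by simp
    then show ?thesis
      using \<open>d > 0\<close> by (simp add: A_norm_power2[symmetric] power_mono)
  qed
  have "real n * d\<^sup>2 \<le> c * (norm x)\<^sup>2" for n
  proof -
    have "real n * d\<^sup>2 \<le> (\<Sum>k<n. A ((landweber_step c ^^ k) x) \<bullet> (landweber_step c ^^ k) x)"
      using sum_mono[of "{..<n}" "\<lambda>_. d\<^sup>2"] residual_large by simp
    also have "\<dots> \<le> c * ((norm x)\<^sup>2 - (norm ((landweber_step c ^^ n) x))\<^sup>2)"
      using landweber_A_form_sum_le[OF \<open>onorm A < c\<close>] .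
    also have "\<dots> \<le> c * (norm x)\<^sup>2"
      using onorm_pos_le[OF bounded_linear_A] by (simp add: c_def)
    finally show ?thesis .
  qed
  moreover obtain n :: nat where "real n > c * (norm x)\<^sup>2 / d\<^sup>2"
    using reals_Archimedean2 by blast
  then have "c * (norm x)\<^sup>2 < real n * d\<^sup>2"
    using \<open>d > 0\<close> by (simp add: divide_less_eq)
  ultimately show False
    by (meson not_le)
qed

text \<open>Classical power trick: the A-Cauchy-Schwarz inequality gives
  (A(S^m x)\<cdot>S^m x)^2 \<le> (Ax\<cdot>x)(A(S^2m x)\<cdot>S^2m x), and iterating along m = 2^n compares the
  A-growth of S with its (exponential) norm growth.\<close>

lemma A_symmetric_funpow:
  assumes "\<And>x y. A (S x) \<bullet> y = A x \<bullet> S y"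
  shows "A ((S ^^ m) x) \<bullet> y = A x \<bullet> (S ^^ m) y"
  by (induction m arbitrary: x y) (simp_all add: assms funpow_swap1)

lemma A_symmetric_funpow_square_le:
  assumes "\<And>x y. A (S x) \<bullet> y = A x \<bullet> S y"
  shows "(A ((S ^^ m) x) \<bullet> (S ^^ m) x)\<^sup>2 \<le> (A x \<bullet> x) * (A ((S ^^ (2 * m)) x) \<bullet> (S ^^ (2 * m)) x)"
proof -
  have "A ((S ^^ m) x) \<bullet> (S ^^ m) x = A x \<bullet> (S ^^ (2 * m)) x"
    by (simp add: A_symmetric_funpow[OF assms] mult_2 funpow_add)
  then show ?thesis
    using A_form_Cauchy_Schwarz[of x "(S ^^ (2 * m)) x"] by simp
qed

lemma A_form_funpow_le:
  fixes S :: "'a \<Rightarrow> 'a"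
  assumes "\<And>x. norm (S x) \<le> K * norm x" and "0 \<le> K"
  shows "A ((S ^^ m) x) \<bullet> (S ^^ m) x \<le> onorm A * (norm x)\<^sup>2 * (K\<^sup>2) ^ m"
proof -
  have "A ((S ^^ m) x) \<bullet> (S ^^ m) x \<le> onorm A * (norm ((S ^^ m) x))\<^sup>2"
    by (rule A_form_le_onorm)
  also have "\<dots> \<le> onorm A * (K ^ m * norm x)\<^sup>2"
    using norm_funpow_le[OF assms] onorm_pos_le[OF bounded_linear_A]
    by (simp add: mult_left_mono power_mono)
  finally show ?thesis
    by (simp add: power_mult_distrib power_mult[symmetric] mult.commute mult.left_commute)
qed

lemma A_symmetric_A_bounded:
  assumes "bounded_linear S" and symmetric: "\<And>x y. A (S x) \<bullet> y = A x \<bullet> S y"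
  shows "\<exists>L\<ge>0. \<forall>x. A (S x) \<bullet> S x \<le> L * (A x \<bullet> x)"
proof -
  obtain K where "K > 0" and K: "\<And>x. norm (S x) \<le> K * norm x"
    using bounded_linear.pos_bounded[OF assms(1)] by (metis mult.commute)
  have "A (S x) \<bullet> S x \<le> K\<^sup>2 * (A x \<bullet> x)" for x
  proof (cases "A x \<bullet> x = 0")
    case True
    then show ?thesis
      using A_symmetric_funpow_square_le[OF symmetric, of 1 x] by simp
  next
    case False
    then have "0 < A x \<bullet> x" using A_form_nonneg[of x] by simp
    define f where "f m = A ((S ^^ m) x) \<bullet> (S ^^ m) x / (A x \<bullet> x)" for m
    have "(f m)\<^sup>2 \<le> f (2 * m)" for m
      using A_symmetric_funpow_square_le[OF symmetric, of m x] \<open>0 < A x \<bullet> x\<close>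
      by (simp add: f_def power_divide divide_le_eq power2_eq_square mult.commute)
    moreover have "0 \<le> f 1" by (simp add: f_def A_form_nonneg)
    ultimately have "f 1 ^ 2 ^ n \<le> f (2 ^ n)" for n by (rule power2_iterate_le)
    moreover have "f m \<le> onorm A * (norm x)\<^sup>2 / (A x \<bullet> x) * (K\<^sup>2) ^ m" for m
      using A_form_funpow_le[OF K, of m x] \<open>K > 0\<close> \<open>0 < A x \<bullet> x\<close>
      by (simp add: f_def divide_le_eq mult.commute mult.left_commute)
    ultimately have iterates_bounded:
      "f 1 ^ 2 ^ n \<le> onorm A * (norm x)\<^sup>2 / (A x \<bullet> x) * (K\<^sup>2) ^ 2 ^ n" for n
      by (meson order_trans)
    have "f 1 \<le> K\<^sup>2"
      using le_if_power2_iterates_bounded[OF _ iterates_bounded] \<open>K > 0\<close> by simp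
    then show ?thesis
      using \<open>0 < A x \<bullet> x\<close> by (simp add: f_def divide_le_eq)
  qed
  then show ?thesis by (intro exI[of _ "K\<^sup>2"]) simp
qed

lemma B_A_obtain_adjoint:
  assumes "T \<in> B_A J A"
  obtains W where "bounded_linear T" "bounded_linear W" "\<And>x y. A (T x) \<bullet> y = A x \<bullet> W y"
proof -
  obtain W where "bounded_clinear_op J T" "bounded_clinear_op J W"
    and "\<And>x y. A_inner J A (T x) y = A_inner J A x (W y)"
    using assms unfolding B_A_def by blast
  then have "bounded_linear T" "bounded_linear W" "\<And>x y. A (T x) \<bullet> y = A x \<bullet> W y"
    by (simp_all add: bounded_clinear_op_def A_form_eq_Re)
  then show thesis by (rule that)
qed

lemma B_A_A_bounded:
  assumes "T \<in> B_A J A"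
  shows "\<exists>C\<ge>0. \<forall>x. A_norm J A (T x) \<le> C * A_norm J A x"
proof -
  obtain W where T: "bounded_linear T" and W: "bounded_linear W"
    and adjoint: "\<And>x y. A (T x) \<bullet> y = A x \<bullet> W y"
    using B_A_obtain_adjoint[OF assms] by blast
  have symmetric: "A (W (T x)) \<bullet> y = A x \<bullet> W (T y)" for x y
  proof -
    have "A (W (T x)) \<bullet> y = A y \<bullet> W (T x)" by (rule A_form_commute)
    also have "\<dots> = A (T y) \<bullet> T x" by (simp add: adjoint)
    also have "\<dots> = A (T x) \<bullet> T y" by (rule A_form_commute)
    also have "\<dots> = A x \<bullet> W (T y)" by (rule adjoint)
    finally show ?thesis .
  qed
  obtain L where "L \<ge> 0" and L: "\<And>x. A (W (T x)) \<bullet> W (T x) \<le> L * (A x \<bullet> x)"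
    using A_symmetric_A_bounded[OF bounded_linear_compose[OF W T] symmetric] by blast
  define C where "C = sqrt (sqrt L)"
  have "C \<ge> 0" using \<open>L \<ge> 0\<close> by (simp add: C_def)
  have C_square: "C * C = sqrt L"
    using \<open>L \<ge> 0\<close> by (simp add: C_def)
  have "A_norm J A (T x) \<le> C * A_norm J A x" for x
  proof -
    have "A_norm J A (W (T x)) \<le> sqrt (L * (A x \<bullet> x))"
      unfolding A_norm_eq using L[of x] by (rule real_sqrt_le_mono)
    then have WT: "A_norm J A (W (T x)) \<le> sqrt L * A_norm J A x"
      by (simp add: A_norm_eq real_sqrt_mult)
    have "(A_norm J A (T x))\<^sup>2 = A x \<bullet> W (T x)"
      by (simp add: A_norm_power2 adjoint)
    also have "\<dots> \<le> A_norm J A x * A_norm J A (W (T x))"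
      by (rule A_form_le)
    also have "\<dots> \<le> A_norm J A x * (sqrt L * A_norm J A x)"
      by (rule mult_left_mono[OF WT A_norm_nonneg])
    also have "\<dots> = (C * A_norm J A x)\<^sup>2"
      by (simp only: power2_eq_square C_square[symmetric] ac_simps)
    finally show ?thesis
      using \<open>C \<ge> 0\<close> A_norm_nonneg by (meson mult_nonneg_nonneg power2_le_imp_le)
  qed
  then show ?thesis using \<open>C \<ge> 0\<close> by blast
qed

lemma A_norm_ratio_le_A_opnorm:
  assumes "T \<in> B_A J A" and "y \<in> closure (range A)" and "y \<noteq> 0"
  shows "A_norm J A (T y) / A_norm J A y \<le> A_opnorm J A T"
proof -
  define R where "R = {A_norm J A (T x) / A_norm J A x | x. x \<in> closure (range A) \<and> x \<noteq> 0}"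
  obtain C where "C \<ge> 0" and C: "\<And>x. A_norm J A (T x) \<le> C * A_norm J A x"
    using B_A_A_bounded[OF assms(1)] by blast
  have "A_norm J A (T x) / A_norm J A x \<le> C" for x
    using C[of x] A_norm_nonneg[of x] \<open>0 \<le> C\<close>
    by (cases "A_norm J A x = 0") (simp_all add: divide_le_eq)
  then have "bdd_above R"
    unfolding R_def bdd_above_def by blast
  have "A_norm J A (T y) / A_norm J A y \<in> R"
    using assms(2,3) unfolding R_def by (intro CollectI exI[of _ y]) simp
  then show ?thesis
    unfolding A_opnorm_def R_def[symmetric] using \<open>bdd_above R\<close> by (rule cSup_upper)
qed

lemma A_norm_le_A_opnorm_on_range:
  assumes "T \<in> B_A J A" and "y \<in> range A"
  shows "A_norm J A (T y) \<le> A_opnorm J A T * A_norm J A y"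
proof (cases "A_norm J A y = 0")
  case True
  obtain C where "\<And>x. A_norm J A (T x) \<le> C * A_norm J A x"
    using B_A_A_bounded[OF assms(1)] by blast
  then have "A_norm J A (T y) \<le> 0"
    using True by (metis mult_zero_right)
  then show ?thesis
    using True by simp
next
  case False
  then have "y \<noteq> 0" "0 < A_norm J A y"
    using A_norm_nonneg[of y] by (auto simp: A_norm_eq)
  have "y \<in> closure (range A)"
    using closure_subset assms(2) by (rule subsetD)
  then have "A_norm J A (T y) / A_norm J A y \<le> A_opnorm J A T"
    using \<open>y \<noteq> 0\<close> by (rule A_norm_ratio_le_A_opnorm[OF assms(1)])
  then show ?thesis
    using \<open>0 < A_norm J A y\<close> by (simp add: divide_le_eq mult.commute)
qed

lemma A_opnorm_nonneg:
  assumes "T \<in> B_A J A" and "range A \<noteq> {0}"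
  shows "0 \<le> A_opnorm J A T"
proof -
  have "0 \<in> range A" by (metis A_zero rangeI)
  with assms(2) obtain u where "u \<in> range A" "u \<noteq> 0" by auto
  moreover have "u \<in> closure (range A)"
    using closure_subset \<open>u \<in> range A\<close> by (rule subsetD)
  ultimately show ?thesis
    using A_norm_ratio_le_A_opnorm[OF assms(1)] A_norm_nonneg order_trans
    by (metis divide_nonneg_nonneg)
qed

text \<open>Approximating x by A w only in the A-seminorm suffices because T is A-bounded.\<close>

lemma A_norm_le_A_opnorm:
  assumes "T \<in> B_A J A" and "range A \<noteq> {0}"
  shows "A_norm J A (T x) \<le> A_opnorm J A T * A_norm J A x"
proof (rule field_le_epsilon)
  fix e :: real
  assume "0 < e"
  define N where "N = A_opnorm J A T"
  have "0 \<le> N" unfolding N_def using assms by (rule A_opnorm_nonneg)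
  obtain C where "C \<ge> 0" and C: "\<And>x. A_norm J A (T x) \<le> C * A_norm J A x"
    using B_A_A_bounded[OF assms(1)] by blast
  have "linear T"
    using assms(1) by (simp add: B_A_def bounded_clinear_op_def bounded_linear.linear)
  define d where "d = e / (N + C + 1)"
  have "0 < d" using \<open>0 < e\<close> \<open>0 \<le> N\<close> \<open>0 \<le> C\<close> by (simp add: d_def)
  then obtain w where w: "A_norm J A (x - A w) < d"
    using range_A_dense_in_A_norm by blast
  have "A_norm J A (A w) \<le> A_norm J A x + A_norm J A (A w - x)"
    using A_norm_triangle[of x "A w - x"] by simp
  also have "A_norm J A (A w - x) = A_norm J A (x - A w)"
    using A_norm_minus[of "x - A w"] by simp
  finally have Aw: "A_norm J A (A w) \<le> A_norm J A x + d" using w by simp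
  have "A_norm J A (T x) \<le> A_norm J A (T (A w)) + A_norm J A (T (x - A w))"
    using A_norm_triangle[of "T (A w)" "T (x - A w)"] by (simp add: linear_diff[OF \<open>linear T\<close>])
  also have "\<dots> \<le> N * (A_norm J A x + d) + C * d"
    using A_norm_le_A_opnorm_on_range[OF assms(1), of "A w"] C[of "x - A w"]
      mult_left_mono[OF Aw \<open>0 \<le> N\<close>] mult_left_mono[OF less_imp_le[OF w] \<open>0 \<le> C\<close>]
    by (simp add: N_def)
  also have "\<dots> = N * A_norm J A x + (N + C) * d"
    by (simp add: algebra_simps)
  also have "\<dots> \<le> N * A_norm J A x + e"
    using \<open>0 < e\<close> \<open>0 \<le> N\<close> \<open>0 \<le> C\<close> by (simp add: d_def divide_le_eq)
  finally show "A_norm J A (T x) \<le> A_opnorm J A T * A_norm J A x + e"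
    by (simp add: N_def)
qed

lemma cmod_A_inner_le_w_A:
  assumes "T \<in> B_A J A" and "A_norm J A x = 1"
  shows "cmod (A_inner J A (T x) x) \<le> w_A J A T"
proof -
  obtain C where C: "\<And>x. A_norm J A (T x) \<le> C * A_norm J A x"
    using B_A_A_bounded[OF assms(1)] by blast
  have "cmod (A_inner J A (T z) z) \<le> C" if "A_norm J A z = 1" for z
    using cmod_A_inner_le[of "T z" z] C[of z] that by simp
  then have "bdd_above {cmod (A_inner J A (T z) z) | z. A_norm J A z = 1}"
    unfolding bdd_above_def by blast
  moreover have "cmod (A_inner J A (T x) x) \<in> {cmod (A_inner J A (T z) z) | z. A_norm J A z = 1}"
    using assms(2) by (intro CollectI exI[of _ x]) simp
  ultimately show ?thesis
    unfolding w_A_def by (rule cSup_upper[rotated])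
qed

lemma exists_A_orthonormal_pair:
  assumes "range_dim_ge_2 J A"
  obtains e1 e2 where "A_inner J A e1 e1 = 1" "A_inner J A e2 e2 = 1" "A_inner J A e1 e2 = 0"
proof -
  obtain u v where "u \<in> range A" "v \<in> range A"
    and independent: "\<And>a b. scaleC J a u + scaleC J b v = 0 \<Longrightarrow> a = 0 \<and> b = 0"
    using assms unfolding range_dim_ge_2_def by blast
  have in_range: "z \<in> range A \<Longrightarrow> A_norm J A z = 0 \<Longrightarrow> z = 0" for z
    using range_A_A_form_eq_0 by (simp add: A_norm_eq)
  have "u \<noteq> 0"
    using independent[of 1 0] by (auto simp: scaleC_def)
  define w where "w = v - scaleC J (A_inner J A v u / A_inner J A u u) u"
  have "w \<noteq> 0"
    using independent[of "- (A_inner J A v u / A_inner J A u u)" 1]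
    by (auto simp: w_def scaleC_def algebra_simps)
  have "w \<in> range A"
  proof -
    obtain u' v' where "u = A u'" "v = A v'" using \<open>u \<in> range A\<close> \<open>v \<in> range A\<close> by blast
    then have "w = A (v' - scaleC J (A_inner J A v u / A_inner J A u u) u')"
      by (simp add: w_def A_scaleC)
    then show ?thesis by blast
  qed
  have "A_norm J A u \<noteq> 0" "A_norm J A w \<noteq> 0"
    using in_range \<open>u \<in> range A\<close> \<open>u \<noteq> 0\<close> \<open>w \<in> range A\<close> \<open>w \<noteq> 0\<close> by blast+
  have "A_inner J A u u \<noteq> 0"
    using \<open>A_norm J A u \<noteq> 0\<close> by (simp add: A_inner_self)
  then have "A_inner J A w u = 0"
    by (simp add: w_def A_inner_diff_left A_inner_scaleC_left)
  then have "A_inner J A u w = 0"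
    by (simp add: A_inner_commute[of u w])
  show thesis
    by (rule that[of "(1 / A_norm J A u) *\<^sub>R u" "(1 / A_norm J A w) *\<^sub>R w"])
      (simp_all add: A_inner_self[of u] A_inner_self[of w] power2_eq_square
        \<open>A_norm J A u \<noteq> 0\<close> \<open>A_norm J A w \<noteq> 0\<close> \<open>A_inner J A u w = 0\<close>)
qed

lemma range_dim_ge_2_range_nontrivial:
  assumes "range_dim_ge_2 J A"
  shows "range A \<noteq> {0}"
proof -
  obtain e where "A_inner J A e e = 1"
    using exists_A_orthonormal_pair[OF assms] by metis
  then have "A e \<noteq> 0" by (auto simp: A_inner_eq complex_eq_iff)
  then show ?thesis by blast
qed

lemma exists_A_unit_pair_with_inner:
  assumes "range_dim_ge_2 J A" and "cmod q \<le> 1"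
  obtains x y where "A_norm J A x = 1" "A_norm J A y = 1" "A_inner J A x y = q"
proof -
  obtain e1 e2 where e1: "A_inner J A e1 e1 = 1" and e2: "A_inner J A e2 e2 = 1"
    and e1_e2: "A_inner J A e1 e2 = 0"
    using exists_A_orthonormal_pair[OF assms(1)] by metis
  have e2_e1: "A_inner J A e2 e1 = 0"
    using e1_e2 by (simp add: A_inner_commute[of e2 e1])
  define s where "s = sqrt (1 - (cmod q)\<^sup>2)"
  have "(cmod q)\<^sup>2 \<le> 1"
    using assms(2) by (simp add: power_le_one)
  then have s2: "s\<^sup>2 = 1 - (cmod q)\<^sup>2"
    by (simp add: s_def)
  define y where "y = scaleC J (cnj q) e1 + s *\<^sub>R e2"
  have "A_inner J A e1 y = q"
    by (simp add: y_def A_inner_add_right A_inner_scaleC_right e1 e1_e2)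
  moreover have "A_inner J A y y = 1"
  proof -
    have "A_inner J A y y = cnj q * q + complex_of_real (s\<^sup>2)"
      by (simp add: y_def A_inner_add_left A_inner_add_right A_inner_scaleC_left
          A_inner_scaleC_right e1 e2 e1_e2 e2_e1 power2_eq_square)
    also have "\<dots> = 1"
      by (simp add: s2 mult.commute complex_mult_cnj cmod_power2 del: of_real_power)
    finally show ?thesis .
  qed
  ultimately show thesis
    using e1 by (intro that[of e1 y]) (simp_all add: A_norm_eq_1_iff)
qed

lemma cmod_A_inner_le_w_A_A_opnorm:
  assumes "T \<in> B_A J A" and "range A \<noteq> {0}"
    and "A_norm J A x = 1" and "A_norm J A y = 1" and "A_inner J A x y = q"
  shows "cmod (A_inner J A (T x) y) \<le> cmod q * w_A J A T + sqrt (1 - (cmod q)\<^sup>2) * A_opnorm J A T"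
proof -
  define w where "w = y - scaleC J (cnj q) x"
  have x_x: "A_inner J A x x = 1" and y_y: "A_inner J A y y = 1"
    using assms(3,4) by (simp_all add: A_norm_eq_1_iff)
  have y_x: "A_inner J A y x = cnj q"
    using assms(5) by (simp add: A_inner_commute[of y x])
  have "A_inner J A w w = 1 - complex_of_real ((cmod q)\<^sup>2)"
    by (simp add: w_def A_inner_diff_left A_inner_diff_right A_inner_scaleC_left A_inner_scaleC_right
        x_x y_y y_x assms(5) mult.commute complex_mult_cnj cmod_power2 del: of_real_power)
  then have norm_w: "A_norm J A w = sqrt (1 - (cmod q)\<^sup>2)"
    by (simp add: A_norm_def)
  have "A_inner J A (T x) y = q * A_inner J A (T x) x + A_inner J A (T x) w"
    by (simp add: w_def A_inner_diff_right A_inner_scaleC_right)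
  then have "cmod (A_inner J A (T x) y) \<le> cmod q * cmod (A_inner J A (T x) x) + cmod (A_inner J A (T x) w)"
    by (metis norm_mult norm_triangle_ineq)
  also have "\<dots> \<le> cmod q * w_A J A T + A_norm J A (T x) * A_norm J A w"
    using cmod_A_inner_le_w_A[OF assms(1,3)] cmod_A_inner_le[of "T x" w]
    by (intro add_mono mult_left_mono) simp_all
  also have "A_norm J A (T x) \<le> A_opnorm J A T"
    using A_norm_le_A_opnorm[OF assms(1,2), of x] assms(3) by simp
  then have "A_norm J A (T x) * A_norm J A w \<le> A_opnorm J A T * A_norm J A w"
    using A_norm_nonneg by (rule mult_right_mono)
  finally show ?thesis
    using norm_w by (simp add: mult.commute)
qed

end

theorem mainTheorem3:
  fixes J :: "'a::{real_inner, complete_space} \<Rightarrow> 'a"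
    and A T :: "'a \<Rightarrow> 'a"
    and q :: complex
  assumes "complex_structure J"
    and "positive_op J A"
    and "range_dim_ge_2 J A"
    and "T \<in> B_A J A"
    and "cmod q \<le> 1"
  shows "w_qA J A q T \<le> sqrt ((cmod q)\<^sup>2 * (w_A J A T)\<^sup>2 + (1 - (cmod q)\<^sup>2) * (A_opnorm J A T)\<^sup>2
            + 2 * cmod q * sqrt (1 - (cmod q)\<^sup>2) * w_A J A T * A_opnorm J A T)"
proof -
  interpret semi_hilbertian J A
    using assms(1,2) by unfold_locales
  have "w_qA J A q T \<le> cmod q * w_A J A T + sqrt (1 - (cmod q)\<^sup>2) * A_opnorm J A T"
    unfolding w_qA_def
  proof (rule cSup_least)
    obtain x y where "A_norm J A x = 1" "A_norm J A y = 1" "A_inner J A x y = q"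
      using exists_A_unit_pair_with_inner[OF assms(3,5)] by metis
    then show "{cmod (A_inner J A (T x) y) |x y.
        A_norm J A x = 1 \<and> A_norm J A y = 1 \<and> A_inner J A x y = q} \<noteq> {}"
      by blast
  qed (auto intro: cmod_A_inner_le_w_A_A_opnorm[OF assms(4) range_dim_ge_2_range_nontrivial[OF assms(3)]])
  also have "\<dots> \<le> sqrt ((cmod q)\<^sup>2 * (w_A J A T)\<^sup>2 + (1 - (cmod q)\<^sup>2) * (A_opnorm J A T)\<^sup>2
            + 2 * cmod q * sqrt (1 - (cmod q)\<^sup>2) * w_A J A T * A_opnorm J A T)"
    using assms(5) by (intro mult_add_mult_le_sqrt_expanded) (simp add: power_le_one)
  finally show ?thesis .
qed

end
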